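(* Let $\Pi_1$ and $\Pi_2$ be two epistemic logic programs. The following statements are equivalent: (1) $\Pi_1$ and $\Pi_2$ are strongly ELP-CWV-equivalent; (2) $\Pi_1$ and $\Pi_2$ are strongly ASP-CWV-equivalent; (3) $\Pi_1$ and $\Pi_2$ are strongly ELP-WV-equivalent; (4) $\Pi_1$ and $\Pi_2$ are strongly ASP-WV-equivalent; (5) $\mathcal{SE}_{\Pi_1} = \mathcal{SE}_{\Pi_2}$.
   Context: A literal over a set of atoms $\mathcal{A}$ is an atom $a$ or $\neg a$. An interpretation is $I\subseteq\mathcal{A}$; $I\models a$ iff $a\in I$, $I\models\neg\ell$ iff $I\not\models\ell$. A (plain) logic program $(\mathcal{A},\mathcal{R})$ has rules $a_1\vee\cdots\vee a_l \leftarrow a_{l+1},\ldots,a_m,\neg\ell_1,\ldots,\neg\ell_n$ ($\ell_i$ literals); $H(r)$ head, $B(r)$ body, $B^+(r)=\{a_{l+1},\ldots,a_m\}$; $M\models r$ iff $M\models B(r)$ implies $M\cap H(r)\neq\emptyset$; $\mathrm{Mods}(\Pi)$ is the set of models. GL-reduct: $\Pi^I=(\mathcal{A},\{H(r)\leftarrow B^+(r)\mid r\in\mathcal{R},\ I\models\neg\ell\ \forall\neg\ell\in B(r)\})$. Answer set: model $M$ of $\Pi$ such that no $M'\subset M$ is a model of $\Pi^M$; $AS(\Pi)$ the set of answer sets ($\neg\neg\neg a$ treated as $\neg a$). An SE-model of $\Pi$ is $(X,Y)$ with $X\subseteq Y\subseteq\mathcal{A}$, $Y\models\Pi$, $X\models\Pi^Y$;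 $\mathrm{SE}(\Pi)$ the set of SE-models. An ELP is $(\mathcal{A},\mathcal{E},\mathcal{R})$ with $\mathcal{E}$ a set of epistemic literals $\mathbf{not}\,\ell$ and rules $a_1\vee\cdots\vee a_k\leftarrow \ell_1,\ldots,\ell_m,\xi_1,\ldots,\xi_j,\neg\xi_{j+1},\ldots,\neg\xi_n$, $\xi_i\in\mathcal{E}$. The union of ELPs is componentwise: $(\mathcal{A}_1,\mathcal{E}_1,\mathcal{R}_1)\cup(\mathcal{A}_2,\mathcal{E}_2,\mathcal{R}_2)=(\mathcal{A}_1\cup\mathcal{A}_2,\mathcal{E}_1\cup\mathcal{E}_2,\mathcal{R}_1\cup\mathcal{R}_2)$; a plain logic program is regarded as an ELP with no epistemic literals. A guess is $\Phi\subseteq\mathcal{E}$; $\mathcal{I}$ is $\Phi$-compatible w.r.t. $\mathcal{E}$ iff $\mathcal{I}\neq\emptyset$, every $\mathbf{not}\,\ell\in\Phi$ has some $I\in\mathcal{I}$ with $I\not\models\ell$, and every $\mathbf{not}\,\ell\in\mathcal{E}\setminus\Phi$ has $I\models\ell$ for all $I\in\mathcal{I}$. The epistemic reduct $\Pi^\Phi=(\mathcal{A},\mathcal{R}^\Phi)$ replaces each $\mathbf{not}\,\ell\in\Phi$ by $\top$ and every other $\mathbf{not}$ by $\neg$. A candidate world view (CWV) of $\Pi$ is a set $\mathcal{M}=AS(\Pi^\Phi)$ that is $\Phi$-compatible w.r.t. $\mathcal{E}$, for some guess $\Phi$ (its associated guess). A world view (WV) is a CWV whose associated guess is subset-maximal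 among associated guesses of CWVs. Two ELPs are CWV-equivalent (WV-equivalent) iff their sets of CWVs (WVs) coincide. $\Pi_1,\Pi_2$ are strongly ELP-WV-equivalent (resp. ELP-CWV-equivalent) iff for every ELP $\Pi$, $\Pi_1\cup\Pi$ and $\Pi_2\cup\Pi$ are WV-equivalent (resp. CWV-equivalent); strongly ASP-WV-equivalent (resp. ASP-CWV-equivalent) iff the same holds for every plain logic program $\Pi$. $\Phi$ is realizable in $\Pi$ iff some subset of $\mathrm{Mods}(\Pi^\Phi)$ is $\Phi$-compatible w.r.t. $\mathcal{E}$. The SE-function of an ELP $\Pi=(\mathcal{A},\mathcal{E},\mathcal{R})$: $\mathcal{SE}_\Pi(\Phi)=\mathrm{SE}(\Pi^\Phi)$ if $\Phi$ is realizable in $\Pi$, and $\emptyset$ otherwise (programs may be assumed over common $\mathcal{A},\mathcal{E}$ when comparing SE-functions). *)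

theory Defs
  imports Main
begin

text \<open>Formulas occurring in rule bodies: atoms, the constant top (produced by the
epistemic reduct) and (nested) default negation.\<close>
datatype 'a fml = Atm 'a | Top | Neg "'a fml"

primrec sat :: "'a set \<Rightarrow> 'a fml \<Rightarrow> bool" where
  "sat I (Atm a) = (a \<in> I)"
| "sat I Top = True"
| "sat I (Neg f) = (\<not> sat I f)"

primrec fatoms :: "'a fml \<Rightarrow> 'a set" where
  "fatoms (Atm a) = {a}"
| "fatoms Top = {}"
| "fatoms (Neg f) = fatoms f"

definition is_literal :: "'a fml \<Rightarrow> bool" where
  "is_literal l \<longleftrightarrow> (\<exists>a. l = Atm a \<or> l = Neg (Atm a))"

definition plain_belem :: "'a fml \<Rightarrow> bool" where
  "plain_belem f \<longleftrightarrow> (\<exists>a. f = Atm a) \<or> (\<exists>l. is_literal l \<and> f = Neg l)"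

text \<open>A plain rule: (head, body); a plain program: (atoms, rules).\<close>
type_synonym 'a prule = "'a set \<times> 'a fml set"
type_synonym 'a lp = "'a set \<times> 'a prule set"

text \<open>Body elements of ELP rules: objective elements, epistemic literals
  \<open>Ep l\<close> standing for \<open>not l\<close>, and negated epistemic literals \<open>NEp l\<close> standing
  for \<open>\<not> not l\<close>.\<close>
datatype 'a ebody = Obj "'a fml" | Ep "'a fml" | NEp "'a fml"

type_synonym 'a erule = "'a set \<times> 'a ebody set"
text \<open>An ELP \<open>(A, E, R)\<close>; the set \<open>E\<close> of epistemic literals \<open>not l\<close> is represented
  by the set of the literals \<open>l\<close>.\<close>
type_synonym 'a elp = "'a set \<times> 'a fml set \<times> 'a erule set"

definition elp_atoms :: "'a elp \<Rightarrow> 'a set" where "elp_atoms P = fst P"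
definition elp_eps :: "'a elp \<Rightarrow> 'a fml set" where "elp_eps P = fst (snd P)"
definition elp_rules :: "'a elp \<Rightarrow> 'a erule set" where "elp_rules P = snd (snd P)"

definition wf_ebody :: "'a set \<Rightarrow> 'a fml set \<Rightarrow> 'a ebody \<Rightarrow> bool" where
  "wf_ebody A E b \<longleftrightarrow>
     (case b of Obj f \<Rightarrow> plain_belem f \<and> fatoms f \<subseteq> A
              | Ep l \<Rightarrow> l \<in> E
              | NEp l \<Rightarrow> l \<in> E)"

definition wf_elp :: "'a elp \<Rightarrow> bool" where
  "wf_elp P \<longleftrightarrow> (case P of (A, E, R) \<Rightarrow>
      finite A \<and> finite E \<and> finite R
    \<and> (\<forall>l\<in>E. is_literal l \<and> fatoms l \<subseteq> A)
    \<and> (\<forall>(H, B)\<in>R. H \<subseteq> A \<and> (\<forall>b\<in>B. wf_ebody A E b)))"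

definition plain_elp :: "'a elp \<Rightarrow> bool" where
  "plain_elp P \<longleftrightarrow> wf_elp P \<and> elp_eps P = {}"

definition elp_union :: "'a elp \<Rightarrow> 'a elp \<Rightarrow> 'a elp" where
  "elp_union P Q = (elp_atoms P \<union> elp_atoms Q, elp_eps P \<union> elp_eps Q,
                    elp_rules P \<union> elp_rules Q)"

definition sat_rule :: "'a set \<Rightarrow> 'a prule \<Rightarrow> bool" where
  "sat_rule M r \<longleftrightarrow> ((\<forall>f\<in>snd r. sat M f) \<longrightarrow> M \<inter> fst r \<noteq> {})"

definition Mods :: "'a lp \<Rightarrow> 'a set set" where
  "Mods P = {M. M \<subseteq> fst P \<and> (\<forall>r\<in>snd P. sat_rule M r)}"

definition gl_reduct :: "'a lp \<Rightarrow> 'a set \<Rightarrow> 'a lp" where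
  "gl_reduct P I = (fst P,
     {(fst r, Atm ` {a. Atm a \<in> snd r}) | r.
        r \<in> snd P \<and> (\<forall>l. Neg l \<in> snd r \<longrightarrow> sat I (Neg l))})"

definition AS :: "'a lp \<Rightarrow> 'a set set" where
  "AS P = {M. M \<in> Mods P \<and> \<not> (\<exists>M'. M' \<subset> M \<and> M' \<in> Mods (gl_reduct P M))}"

definition SE :: "'a lp \<Rightarrow> ('a set \<times> 'a set) set" where
  "SE P = {(X, Y). X \<subseteq> Y \<and> Y \<subseteq> fst P \<and> Y \<in> Mods P \<and> X \<in> Mods (gl_reduct P Y)}"

definition compatible :: "'a set set \<Rightarrow> 'a fml set \<Rightarrow> 'a fml set \<Rightarrow> bool" where
  "compatible \<I> Phi E \<longleftrightarrow> \<I> \<noteq> {}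
     \<and> (\<forall>l\<in>Phi. \<exists>I\<in>\<I>. \<not> sat I l)
     \<and> (\<forall>l\<in>E - Phi. \<forall>I\<in>\<I>. sat I l)"

text \<open>Epistemic reduct: \<open>not l \<in> Phi\<close> becomes top, every other \<open>not\<close> becomes \<open>\<not>\<close>.\<close>
primrec ered :: "'a fml set \<Rightarrow> 'a ebody \<Rightarrow> 'a fml" where
  "ered Phi (Obj f) = f"
| "ered Phi (Ep l) = (if l \<in> Phi then Top else Neg l)"
| "ered Phi (NEp l) = (if l \<in> Phi then Neg Top else Neg (Neg l))"

definition ep_reduct :: "'a elp \<Rightarrow> 'a fml set \<Rightarrow> 'a lp" where
  "ep_reduct P Phi = (elp_atoms P, {(H, ered Phi ` B) | H B. (H, B) \<in> elp_rules P})"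

definition cwv_with :: "'a elp \<Rightarrow> 'a fml set \<Rightarrow> 'a set set \<Rightarrow> bool" where
  "cwv_with P Phi M \<longleftrightarrow> Phi \<subseteq> elp_eps P \<and> M = AS (ep_reduct P Phi)
      \<and> compatible M Phi (elp_eps P)"

definition CWV :: "'a elp \<Rightarrow> 'a set set set" where
  "CWV P = {M. \<exists>Phi. cwv_with P Phi M}"

definition WV :: "'a elp \<Rightarrow> 'a set set set" where
  "WV P = {M. \<exists>Phi. cwv_with P Phi M
              \<and> \<not> (\<exists>Phi' M'. cwv_with P Phi' M' \<and> Phi \<subset> Phi')}"

definition strongly_elp_wv_eq :: "'a elp \<Rightarrow> 'a elp \<Rightarrow> bool" where
  "strongly_elp_wv_eq P1 P2 \<longleftrightarrow>
     (\<forall>P. wf_elp P \<longrightarrow> WV (elp_union P1 P) = WV (elp_union P2 P))"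

definition strongly_elp_cwv_eq :: "'a elp \<Rightarrow> 'a elp \<Rightarrow> bool" where
  "strongly_elp_cwv_eq P1 P2 \<longleftrightarrow>
     (\<forall>P. wf_elp P \<longrightarrow> CWV (elp_union P1 P) = CWV (elp_union P2 P))"

definition strongly_asp_wv_eq :: "'a elp \<Rightarrow> 'a elp \<Rightarrow> bool" where
  "strongly_asp_wv_eq P1 P2 \<longleftrightarrow>
     (\<forall>P. plain_elp P \<longrightarrow> WV (elp_union P1 P) = WV (elp_union P2 P))"

definition strongly_asp_cwv_eq :: "'a elp \<Rightarrow> 'a elp \<Rightarrow> bool" where
  "strongly_asp_cwv_eq P1 P2 \<longleftrightarrow>
     (\<forall>P. plain_elp P \<longrightarrow> CWV (elp_union P1 P) = CWV (elp_union P2 P))"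

definition realizable :: "'a elp \<Rightarrow> 'a fml set \<Rightarrow> bool" where
  "realizable P Phi \<longleftrightarrow> (\<exists>\<I>. \<I> \<subseteq> Mods (ep_reduct P Phi) \<and> compatible \<I> Phi (elp_eps P))"

text \<open>SE-function; defined on guesses \<open>Phi \<subseteq> E\<close> (value \<open>{}\<close> elsewhere).\<close>
definition SE_fun :: "'a elp \<Rightarrow> 'a fml set \<Rightarrow> ('a set \<times> 'a set) set" where
  "SE_fun P Phi = (if Phi \<subseteq> elp_eps P \<and> realizable P Phi then SE (ep_reduct P Phi) else {})"

end

theory Submission
  imports Defs
begin

text \<open>
  If the SE-functions agree, take any ELP \<open>\<Pi>\<close> and a guess \<open>\<Psi>\<close>. The epistemic reduct of
  \<open>\<Pi>\<^sub>i \<union> \<Pi>\<close> is the reduct of \<open>\<Pi>\<^sub>i\<close> for \<open>\<Phi> = \<Psi> \<inter> E\<close>, which only mentions the atoms of \<open>\<Pi>\<^sub>i\<close>,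
  together with a remainder contributed by \<open>\<Pi>\<close>. The answer sets of such a union see the first
  part only through its SE-models. A candidate world view of \<open>\<Pi>\<^sub>1 \<union> \<Pi>\<close>, restricted to the
  atoms of \<open>\<Pi>\<^sub>1\<close>, shows that \<open>\<Phi>\<close> is realizable in \<open>\<Pi>\<^sub>1\<close>. So equal SE-functions give the same
  candidate world views, with the same guesses, and hence the same world views.

  Conversely, suppose the SE-functions differ at \<open>\<Phi>\<close>. Let \<open>\<I>\<close> be a \<open>\<Phi>\<close>-compatible set of
  models witnessing realizability, and let \<open>(X, Y)\<close> be an SE-model that distinguishes the two
  programs. Using fresh atoms (there are infinitely many), a plain program guesses one of the
  following. Either it picks a branch for some \<open>I \<in> \<I>\<close>, whose only answer set is \<open>I\<close> plus a
  marker. Or it picks a probe, whose answer set \<open>Y\<close> plus a marker exists iff \<open>(Y, Y)\<close> is an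
  SE-model and \<open>(X, Y)\<close> with \<open>X \<noteq> Y\<close> is not. The answer sets of the union then form a world
  view for one program but not even a candidate world view for the other.
\<close>

definition sat_rules :: "'a prule set \<Rightarrow> 'a set \<Rightarrow> bool" where
  "sat_rules Q M \<longleftrightarrow> (\<forall>r\<in>Q. sat_rule M r)"

definition gl_rules :: "'a prule set \<Rightarrow> 'a set \<Rightarrow> 'a prule set" where
  "gl_rules Q I = (\<lambda>r. (fst r, Atm ` {a. Atm a \<in> snd r})) `
     {r \<in> Q. \<forall>l. Neg l \<in> snd r \<longrightarrow> \<not> sat I l}"

definition rules_over :: "'a set \<Rightarrow> 'a prule set \<Rightarrow> bool" where
  "rules_over A Q \<longleftrightarrow> (\<forall>(H, B)\<in>Q. H \<subseteq> A \<and> (\<forall>f\<in>B. fatoms f \<subseteq> A))"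

lemma Mods_eq: "Mods P = {M. M \<subseteq> fst P \<and> sat_rules (snd P) M}"
  by (simp add: Mods_def sat_rules_def)

lemma gl_reduct_eq: "gl_reduct P I = (fst P, gl_rules (snd P) I)"
  by (simp add: gl_reduct_def gl_rules_def image_Collect)

lemma AS_iff:
  "M \<in> AS P \<longleftrightarrow> M \<subseteq> fst P \<and> sat_rules (snd P) M \<and>
     \<not> (\<exists>M'. M' \<subset> M \<and> sat_rules (gl_rules (snd P) M) M')"
  by (auto simp: AS_def Mods_eq gl_reduct_eq)

lemma SE_iff:
  "(X, Y) \<in> SE P \<longleftrightarrow>
     X \<subseteq> Y \<and> Y \<subseteq> fst P \<and> sat_rules (snd P) Y \<and> sat_rules (gl_rules (snd P) Y) X"
  by (auto simp: SE_def Mods_eq gl_reduct_eq)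

lemma sat_rules_Un [simp]: "sat_rules (Q1 \<union> Q2) M \<longleftrightarrow> sat_rules Q1 M \<and> sat_rules Q2 M"
  by (auto simp: sat_rules_def)

lemma gl_rules_Un: "gl_rules (Q1 \<union> Q2) M = gl_rules Q1 M \<union> gl_rules Q2 M"
  by (auto simp: gl_rules_def)

lemma sat_rules_gl_rules_iff:
  "sat_rules (gl_rules Q M) M' \<longleftrightarrow>
     (\<forall>r\<in>Q. (\<forall>l. Neg l \<in> snd r \<longrightarrow> \<not> sat M l) \<longrightarrow> sat_rule M' (fst r, Atm ` {a. Atm a \<in> snd r}))"
  by (auto simp: sat_rules_def gl_rules_def)

lemma gl_rules_positive:
  assumes "\<forall>r\<in>Q. \<forall>f\<in>snd r. \<exists>a. f = Atm a"
  shows "gl_rules Q M = Q"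
proof -
  have "{r \<in> Q. \<forall>l. Neg l \<in> snd r \<longrightarrow> \<not> sat M l} = Q"
    using assms by fastforce
  moreover have "Atm ` {a. Atm a \<in> snd r} = snd r" if "r \<in> Q" for r
    using assms that by fastforce
  ultimately show ?thesis
    unfolding gl_rules_def by (simp cong: image_cong)
qed

lemma ball_Setcompr_iff: "(\<forall>r\<in>{f x | x. P x}. Q r) \<longleftrightarrow> (\<forall>x. P x \<longrightarrow> Q (f x))"
  by blast

lemma ball_Setcompr2_iff: "(\<forall>r\<in>{f x y | x y. P x y}. Q r) \<longleftrightarrow> (\<forall>x y. P x y \<longrightarrow> Q (f x y))"
  by blast

lemma sat_cong_atoms: "fatoms f \<subseteq> A \<Longrightarrow> M \<inter> A = M' \<inter> A \<Longrightarrow> sat M f = sat M' f"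
  by (induction f) auto

lemma sat_Int_atoms: "fatoms f \<subseteq> A \<Longrightarrow> sat (M \<inter> A) f = sat M f"
  by (rule sat_cong_atoms) auto

lemma sat_insert_fresh: "fatoms f \<subseteq> A \<Longrightarrow> x \<notin> A \<Longrightarrow> sat (insert x M) f = sat M f"
  by (rule sat_cong_atoms) auto

lemma sat_rules_Int_atoms:
  assumes "rules_over A Q"
  shows "sat_rules Q (M \<inter> A) = sat_rules Q M"
  using assms by (fastforce simp: sat_rules_def sat_rule_def rules_over_def sat_Int_atoms)

lemma gl_rules_Int_atoms:
  assumes "rules_over A Q"
  shows "gl_rules Q (M \<inter> A) = gl_rules Q M"
proof -
  have "sat (M \<inter> A) l = sat M l" if "r \<in> Q" "Neg l \<in> snd r" for r l
    using assms that by (intro sat_Int_atoms) (fastforce simp: rules_over_def)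
  then have "{r \<in> Q. \<forall>l. Neg l \<in> snd r \<longrightarrow> \<not> sat (M \<inter> A) l} =
      {r \<in> Q. \<forall>l. Neg l \<in> snd r \<longrightarrow> \<not> sat M l}"
    by blast
  then show ?thesis
    unfolding gl_rules_def by simp
qed

lemma rules_over_gl_rules: "rules_over A Q \<Longrightarrow> rules_over A (gl_rules Q I)"
  by (fastforce simp: rules_over_def gl_rules_def)

lemma sat_rules_gl_rules_self:
  assumes "sat_rules Q M"
  shows "sat_rules (gl_rules Q M) M"
proof -
  have "sat_rule M (H, Atm ` {a. Atm a \<in> B})"
    if r: "(H, B) \<in> Q" and neg: "\<forall>l. Neg l \<in> B \<longrightarrow> \<not> sat M l" for H B
  proof -
    have "sat M f" if "\<forall>a. Atm a \<in> B \<longrightarrow> a \<in> M" "f \<in> B" for f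
      using that neg by (cases f) auto
    then show ?thesis
      using assms r unfolding sat_rules_def sat_rule_def by fastforce
  qed
  then show ?thesis
    unfolding sat_rules_def gl_rules_def by fastforce
qed

lemma SE_diag: "(I, I) \<in> SE P \<longleftrightarrow> I \<in> Mods P"
  by (auto simp: SE_iff Mods_eq intro: sat_rules_gl_rules_self)

lemma SE_top: "(X, Y) \<in> SE P \<Longrightarrow> (Y, Y) \<in> SE P"
  by (auto simp: SE_iff intro: sat_rules_gl_rules_self)

lemma AS_Un_iff_SE:
  assumes over: "rules_over A Q" and "A \<subseteq> A'"
  shows "M \<in> AS (A', Q \<union> S) \<longleftrightarrow>
    M \<subseteq> A' \<and> sat_rules S M \<and> (M \<inter> A, M \<inter> A) \<in> SE (A, Q) \<and>
    \<not> (\<exists>M'. M' \<subset> M \<and> (M' \<inter> A, M \<inter> A) \<in> SE (A, Q) \<and> sat_rules (gl_rules S M) M')"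
proof -
  have top: "(M \<inter> A, M \<inter> A) \<in> SE (A, Q) \<longleftrightarrow> sat_rules Q M"
    using sat_rules_Int_atoms[OF over] sat_rules_gl_rules_self by (auto simp: SE_iff)
  have below: "(M' \<inter> A, M \<inter> A) \<in> SE (A, Q) \<longleftrightarrow> sat_rules (gl_rules Q M) M'"
    if "M' \<subseteq> M" "sat_rules Q M" for M'
    using that
    by (auto simp: SE_iff sat_rules_Int_atoms[OF over] gl_rules_Int_atoms[OF over]
        sat_rules_Int_atoms[OF rules_over_gl_rules[OF over]])
  show ?thesis
  proof (cases "sat_rules Q M")
    case True
    then show ?thesis
      unfolding AS_iff fst_conv snd_conv sat_rules_Un gl_rules_Un
      using top below by (auto dest: psubset_imp_subset)
  next
    case False
    then show ?thesis
      unfolding AS_iff using top by simp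
  qed
qed

lemma AS_Un_Int_atoms_in_Mods:
  assumes "rules_over A Q" "A \<subseteq> A'" "M \<in> AS (A', Q \<union> S)"
  shows "M \<inter> A \<in> Mods (A, Q)"
proof -
  have "(M \<inter> A, M \<inter> A) \<in> SE (A, Q)"
    using assms(3) unfolding AS_Un_iff_SE[OF assms(1,2)] by blast
  then show ?thesis
    by (simp add: SE_diag)
qed

lemma AS_Un_eq_if_SE_eq:
  assumes "rules_over A Q1" "rules_over A Q2" "A \<subseteq> A'" "SE (A, Q1) = SE (A, Q2)"
  shows "AS (A', Q1 \<union> S) = AS (A', Q2 \<union> S)"
  by (rule set_eqI) (simp only: AS_Un_iff_SE[OF assms(1,3)] AS_Un_iff_SE[OF assms(2,3)] assms(4))

definition ered_rules :: "'a fml set \<Rightarrow> 'a erule set \<Rightarrow> 'a prule set" where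
  "ered_rules Phi R = (\<lambda>r. (fst r, ered Phi ` snd r)) ` R"

definition objective_rules :: "'a prule set \<Rightarrow> 'a erule set" where
  "objective_rules S = (\<lambda>r. (fst r, Obj ` snd r)) ` S"

lemma ep_reduct_eq: "ep_reduct P Phi = (elp_atoms P, ered_rules Phi (elp_rules P))"
  unfolding ep_reduct_def ered_rules_def by (auto simp: image_iff) force+

lemma ered_rules_Un: "ered_rules Phi (R1 \<union> R2) = ered_rules Phi R1 \<union> ered_rules Phi R2"
  by (simp add: ered_rules_def image_Un)

lemma ered_rules_objective_rules: "ered_rules Psi (objective_rules S) = S"
  by (simp add: ered_rules_def objective_rules_def image_image)

lemma Atm_eq_ered_iff: "Atm a = ered Phi b \<longleftrightarrow> b = Obj (Atm a)"
  by (cases b) auto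

lemma sat_rules_ered_rules:
  "sat_rules (ered_rules Phi R) M \<longleftrightarrow> (\<forall>(H, B)\<in>R. (\<forall>b\<in>B. sat M (ered Phi b)) \<longrightarrow> M \<inter> H \<noteq> {})"
  unfolding sat_rules_def ered_rules_def sat_rule_def by (simp add: case_prod_beta)

lemma all_Neg_in_image_iff:
  "(\<forall>l. Neg l \<in> f ` B \<longrightarrow> P l) \<longleftrightarrow> (\<forall>b\<in>B. \<forall>l. f b = Neg l \<longrightarrow> P l)"
  by (metis imageE image_eqI)

lemma ered_rules_extend_guess:
  assumes "Phi \<subseteq> Psi" "\<forall>l\<in>Psi - Phi. \<not> sat M l"
  shows "sat_rules (ered_rules Psi R) M = sat_rules (ered_rules Phi R) M"
    and "gl_rules (ered_rules Psi R) M = gl_rules (ered_rules Phi R) M"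
proof -
  have sat: "sat M (ered Psi b) = sat M (ered Phi b)" for b
    using assms by (cases b) auto
  have neg: "(\<forall>l. ered Psi b = Neg l \<longrightarrow> \<not> sat M l) = (\<forall>l. ered Phi b = Neg l \<longrightarrow> \<not> sat M l)" for b
    using assms by (cases b) auto
  have pos: "{a. Atm a \<in> ered Psi ` B} = {a. Atm a \<in> ered Phi ` B}" for B
    by (auto simp: image_iff Atm_eq_ered_iff)
  have negs: "(\<forall>l. Neg l \<in> ered Psi ` B \<longrightarrow> \<not> sat M l) = (\<forall>l. Neg l \<in> ered Phi ` B \<longrightarrow> \<not> sat M l)"
    for B
    by (simp only: all_Neg_in_image_iff neg)
  show "sat_rules (ered_rules Psi R) M = sat_rules (ered_rules Phi R) M"
    by (simp add: sat_rules_ered_rules sat)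
  show "gl_rules (ered_rules Psi R) M = gl_rules (ered_rules Phi R) M"
    unfolding gl_rules_def ered_rules_def Compr_image_eq image_comp
    by (intro image_cong Collect_cong) (simp_all add: pos negs)
qed

lemma AS_Un_ered_rules_extend_guess:
  assumes "Phi \<subseteq> Psi" "\<forall>l\<in>Psi - Phi. \<not> sat M l"
  shows "M \<in> AS (A', ered_rules Psi R \<union> S) \<longleftrightarrow> M \<in> AS (A', ered_rules Phi R \<union> S)"
  using ered_rules_extend_guess[OF assms] by (simp add: AS_iff gl_rules_Un)

lemma wf_elpD:
  assumes "wf_elp P"
  shows "finite (elp_atoms P)"
    and "\<forall>l\<in>elp_eps P. fatoms l \<subseteq> elp_atoms P"
    and "\<forall>(H, B)\<in>elp_rules P. H \<subseteq> elp_atoms P \<and> (\<forall>b\<in>B. wf_ebody (elp_atoms P) (elp_eps P) b)"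
  using assms by (auto simp: wf_elp_def elp_atoms_def elp_eps_def elp_rules_def split: prod.splits)

lemma rules_over_ered_rules:
  assumes "wf_elp P"
  shows "rules_over (elp_atoms P) (ered_rules Psi (elp_rules P))"
proof -
  have "fatoms (ered Psi b) \<subseteq> elp_atoms P"
    if "wf_ebody (elp_atoms P) (elp_eps P) b" for b
    using that wf_elpD(2)[OF assms] by (cases b) (auto simp: wf_ebody_def)
  then show ?thesis
    using wf_elpD(3)[OF assms] by (fastforce simp: rules_over_def ered_rules_def)
qed

lemma ered_rules_Int_eps:
  assumes "wf_elp P"
  shows "ered_rules Psi (elp_rules P) = ered_rules (Psi \<inter> elp_eps P) (elp_rules P)"
proof -
  have "ered Psi b = ered (Psi \<inter> elp_eps P) b" if "(H, B) \<in> elp_rules P" "b \<in> B" for H B b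
    using that wf_elpD(3)[OF assms] by (cases b) (fastforce simp: wf_ebody_def)+
  then show ?thesis
    unfolding ered_rules_def by (intro image_cong refl prod_eqI) (fastforce intro: image_cong)+
qed

lemma elp_eps_union: "elp_eps (elp_union P R) = elp_eps P \<union> elp_eps R"
  by (simp add: elp_union_def elp_eps_def)

lemma ep_reduct_elp_union:
  assumes "wf_elp P"
  shows "ep_reduct (elp_union P R) Psi = (elp_atoms P \<union> elp_atoms R,
    ered_rules (Psi \<inter> elp_eps P) (elp_rules P) \<union> ered_rules Psi (elp_rules R))"
  using ered_rules_Int_eps[OF assms]
  by (simp add: ep_reduct_eq elp_union_def elp_atoms_def elp_rules_def ered_rules_Un)

lemma compatible_guess_unique:
  assumes "compatible M Phi E" "compatible M Psi E" "Phi \<subseteq> E" "Psi \<subseteq> E"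
  shows "Phi = Psi"
  using assms unfolding compatible_def by blast

lemma compatible_Int_atoms:
  assumes "compatible M Psi E'" "E \<subseteq> E'" "\<forall>l\<in>E. fatoms l \<subseteq> A"
  shows "compatible ((\<lambda>I. I \<inter> A) ` M) (Psi \<inter> E) E"
  unfolding compatible_def
proof (intro conjI ballI)
  have sat: "sat (I \<inter> A) l = sat I l" if "l \<in> E" for I l
    using that assms(3) by (simp add: sat_Int_atoms)
  show "(\<lambda>I. I \<inter> A) ` M \<noteq> {}"
    using assms(1) by (simp add: compatible_def)
  show "\<exists>J\<in>(\<lambda>I. I \<inter> A) ` M. \<not> sat J l" if l: "l \<in> Psi \<inter> E" for l
  proof -
    obtain I where "I \<in> M" "\<not> sat I l"
      using l assms(1) by (auto simp: compatible_def)
    then show ?thesis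
      using sat[of l I] l by auto
  qed
  show "sat J l" if l: "l \<in> E - Psi \<inter> E" and J: "J \<in> (\<lambda>I. I \<inter> A) ` M" for l J
  proof -
    obtain I where "I \<in> M" "J = I \<inter> A"
      using J by blast
    then show ?thesis
      using l assms(1,2) sat[of l I] by (auto simp: compatible_def)
  qed
qed

lemma realizable_if_cwv_with_union:
  assumes "wf_elp P" and cwv: "cwv_with (elp_union P R) Psi M"
  shows "realizable P (Psi \<inter> elp_eps P)"
  unfolding realizable_def
proof (intro exI conjI)
  let ?A = "elp_atoms P"
  have over: "rules_over ?A (ered_rules (Psi \<inter> elp_eps P) (elp_rules P))"
    using rules_over_ered_rules[OF assms(1)] ered_rules_Int_eps[OF assms(1)] by metis
  show "(\<lambda>I. I \<inter> ?A) ` M \<subseteq> Mods (ep_reduct P (Psi \<inter> elp_eps P))"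
  proof -
    have "M = AS (?A \<union> elp_atoms R,
        ered_rules (Psi \<inter> elp_eps P) (elp_rules P) \<union> ered_rules Psi (elp_rules R))"
      using cwv by (simp add: cwv_with_def ep_reduct_elp_union[OF assms(1)])
    then show ?thesis
      using AS_Un_Int_atoms_in_Mods[OF over Un_upper1] by (auto simp: ep_reduct_eq)
  qed
  show "compatible ((\<lambda>I. I \<inter> ?A) ` M) (Psi \<inter> elp_eps P) (elp_eps P)"
    using cwv wf_elpD(2)[OF assms(1)]
    by (intro compatible_Int_atoms[of M Psi "elp_eps (elp_union P R)"])
      (auto simp: cwv_with_def elp_eps_union)
qed

lemma realizable_imp_SE_nonempty:
  assumes "realizable P Phi"
  shows "SE (ep_reduct P Phi) \<noteq> {}"
proof -
  obtain \<I> where "\<I> \<subseteq> Mods (ep_reduct P Phi)" "\<I> \<noteq> {}"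
    using assms unfolding realizable_def compatible_def by blast
  then show ?thesis
    using SE_diag by blast
qed

lemma WV_subset_CWV: "WV P \<subseteq> CWV P"
  by (auto simp: WV_def CWV_def)

section \<open>Equal SE-functions give equal (candidate) world views\<close>

lemma SE_ep_reduct_eq_if_SE_fun_eq:
  assumes "SE_fun P1 = SE_fun P2" "elp_eps P1 = elp_eps P2"
    and "Phi \<subseteq> elp_eps P1" "realizable P1 Phi"
  shows "SE (ep_reduct P1 Phi) = SE (ep_reduct P2 Phi)"
proof -
  have "SE_fun P1 Phi = SE (ep_reduct P1 Phi)" "SE (ep_reduct P1 Phi) \<noteq> {}"
    using assms(3) realizable_imp_SE_nonempty[OF assms(4)] by (auto simp: SE_fun_def assms(4))
  then show ?thesis
    using assms(1) by (auto simp: SE_fun_def split: if_splits)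
qed

lemma cwv_with_union_transfer:
  assumes wf: "wf_elp P1" "wf_elp P2"
    and eq: "elp_atoms P1 = elp_atoms P2" "elp_eps P1 = elp_eps P2" "SE_fun P1 = SE_fun P2"
    and cwv: "cwv_with (elp_union P1 R) Psi M"
  shows "cwv_with (elp_union P2 R) Psi M"
proof -
  define A where "A = elp_atoms P1"
  define Phi where "Phi = Psi \<inter> elp_eps P1"
  define Q1 where "Q1 = ered_rules Phi (elp_rules P1)"
  define Q2 where "Q2 = ered_rules Phi (elp_rules P2)"
  define S where "S = ered_rules Psi (elp_rules R)"
  have reducts: "ep_reduct (elp_union P1 R) Psi = (A \<union> elp_atoms R, Q1 \<union> S)"
    "ep_reduct (elp_union P2 R) Psi = (A \<union> elp_atoms R, Q2 \<union> S)"
    using eq by (simp_all add: ep_reduct_elp_union wf A_def Phi_def Q1_def Q2_def S_def)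
  have over: "rules_over A Q1" "rules_over A Q2"
    using rules_over_ered_rules[OF wf(1)] rules_over_ered_rules[OF wf(2)] eq(1)
    by (simp_all add: A_def Q1_def Q2_def)
  have "SE (A, Q1) = SE (A, Q2)"
    using SE_ep_reduct_eq_if_SE_fun_eq[OF eq(3,2)] realizable_if_cwv_with_union[OF wf(1) cwv] eq(1)
    by (simp add: A_def Phi_def Q1_def Q2_def ep_reduct_eq)
  then have "AS (A \<union> elp_atoms R, Q1 \<union> S) = AS (A \<union> elp_atoms R, Q2 \<union> S)"
    using AS_Un_eq_if_SE_eq[OF over] by blast
  then show ?thesis
    using cwv eq(2) by (auto simp: cwv_with_def reducts elp_eps_union)
qed

lemma CWV_WV_union_eq_if_SE_fun_eq:
  assumes "wf_elp P1" "wf_elp P2"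
    and "elp_atoms P1 = elp_atoms P2" "elp_eps P1 = elp_eps P2" "SE_fun P1 = SE_fun P2"
  shows "CWV (elp_union P1 R) = CWV (elp_union P2 R)" "WV (elp_union P1 R) = WV (elp_union P2 R)"
proof -
  have "cwv_with (elp_union P1 R) Psi M \<longleftrightarrow> cwv_with (elp_union P2 R) Psi M" for Psi M
    using cwv_with_union_transfer[OF assms]
      cwv_with_union_transfer[OF assms(2,1) assms(3-5)[symmetric]]
    by blast
  then show "CWV (elp_union P1 R) = CWV (elp_union P2 R)"
    and "WV (elp_union P1 R) = WV (elp_union P2 R)"
    unfolding CWV_def WV_def by simp_all
qed

section \<open>A plain program separating different SE-functions\<close>

definition probe_passes :: "'a set \<Rightarrow> 'a set \<Rightarrow> ('a set \<times> 'a set) set \<Rightarrow> bool" where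
  "probe_passes X Y S \<longleftrightarrow> (Y, Y) \<in> S \<and> (X = Y \<or> (X, Y) \<notin> S)"

locale tester =
  fixes A :: "'a set" and \<I> :: "'a set set" and g :: "'a set \<Rightarrow> 'a" and g0 :: 'a
    and X Y :: "'a set"
  assumes finite_A: "finite A" and \<I>_sub: "\<I> \<subseteq> Pow A" and inj_g: "inj_on g \<I>"
    and g_fresh: "g ` \<I> \<inter> A = {}" and g0_fresh: "g0 \<notin> A \<union> g ` \<I>"
    and X_sub_Y: "X \<subseteq> Y" and Y_sub_A: "Y \<subseteq> A"
begin

text \<open>
  The disjunctive fact guesses a branch atom \<open>g I\<close> or the probe atom \<open>g0\<close>. The branch rules
  force \<open>g I\<close> to come with exactly \<open>I\<close> on \<open>A\<close>; the probe rules and constraints force \<open>g0\<close> to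
  come with exactly \<open>Y\<close>. In the GL-reduct w.r.t. \<open>insert g0 Y\<close> the constraints disappear,
  and the probe rules then admit exactly one smaller candidate, \<open>insert g0 X\<close>.
\<close>

definition branch_rules :: "'a prule set" where
  "branch_rules =
     {({a}, {Atm (g I)}) | I a. I \<in> \<I> \<and> a \<in> I}
   \<union> {({}, {Atm (g I), Atm a}) | I a. I \<in> \<I> \<and> a \<in> A - I}"

definition probe_rules :: "'a prule set" where
  "probe_rules =
     {({a}, {Atm g0}) | a. a \<in> X}
   \<union> {({a}, {Atm g0, Atm c}) | a c. a \<in> Y - X \<and> c \<in> Y - X}
   \<union> {({}, {Atm g0, Atm a}) | a. a \<in> A - Y}"

definition probe_constraints :: "'a prule set" where
  "probe_constraints = {({}, {Atm g0, Neg (Atm b)}) | b. b \<in> Y - X}"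

definition tester_rules :: "'a prule set" where
  "tester_rules = {(insert g0 (g ` \<I>), {})} \<union> branch_rules \<union> probe_rules \<union> probe_constraints"

definition tester_atoms :: "'a set" where
  "tester_atoms = A \<union> insert g0 (g ` \<I>)"

lemma sat_branch_rules: "sat_rules branch_rules M \<longleftrightarrow> (\<forall>I\<in>\<I>. g I \<in> M \<longrightarrow> M \<inter> A = I)"
  using \<I>_sub unfolding branch_rules_def sat_rules_def ball_Un ball_Setcompr2_iff
  by (auto simp: sat_rule_def)

lemma sat_probe_rules:
  "sat_rules probe_rules M \<longleftrightarrow>
     (g0 \<in> M \<longrightarrow> X \<subseteq> M \<and> M \<inter> A \<subseteq> Y \<and> (M \<inter> (Y - X) \<noteq> {} \<longrightarrow> Y - X \<subseteq> M))"
  unfolding probe_rules_def sat_rules_def ball_Un ball_Setcompr_iff ball_Setcompr2_iff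
  by (auto simp: sat_rule_def)

lemma sat_probe_constraints: "sat_rules probe_constraints M \<longleftrightarrow> (g0 \<in> M \<longrightarrow> Y - X \<subseteq> M)"
  unfolding probe_constraints_def sat_rules_def ball_Setcompr_iff by (auto simp: sat_rule_def)

lemma sat_gl_probe_constraints:
  "sat_rules (gl_rules probe_constraints M) M' \<longleftrightarrow> (g0 \<in> M' \<longrightarrow> Y - X \<subseteq> M)"
  unfolding probe_constraints_def sat_rules_gl_rules_iff ball_Setcompr_iff
  by (auto simp: sat_rule_def)

lemma gl_tester_rules:
  "gl_rules tester_rules M =
     {(insert g0 (g ` \<I>), {})} \<union> branch_rules \<union> probe_rules \<union> gl_rules probe_constraints M"
proof -
  have "gl_rules ({(insert g0 (g ` \<I>), {})} \<union> branch_rules \<union> probe_rules) M =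
      {(insert g0 (g ` \<I>), {})} \<union> branch_rules \<union> probe_rules"
    by (rule gl_rules_positive) (auto simp: branch_rules_def probe_rules_def)
  then show ?thesis
    unfolding tester_rules_def gl_rules_Un by simp
qed

lemma sat_tester_rules:
  "sat_rules tester_rules M \<longleftrightarrow> M \<inter> insert g0 (g ` \<I>) \<noteq> {} \<and>
     sat_rules branch_rules M \<and> sat_rules probe_rules M \<and> sat_rules probe_constraints M"
  by (auto simp: tester_rules_def sat_rules_def sat_rule_def)

lemma sat_gl_tester_rules:
  "sat_rules (gl_rules tester_rules M) M' \<longleftrightarrow> M' \<inter> insert g0 (g ` \<I>) \<noteq> {} \<and>
     sat_rules branch_rules M' \<and> sat_rules probe_rules M' \<and> (g0 \<in> M' \<longrightarrow> Y - X \<subseteq> M)"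
  unfolding gl_tester_rules sat_rules_Un sat_gl_probe_constraints
  by (simp add: sat_rules_def sat_rule_def)

lemma A_sub_tester_atoms: "A \<subseteq> tester_atoms"
  by (auto simp: tester_atoms_def)

lemma branch_Int_A: "I \<in> \<I> \<Longrightarrow> insert (g I) I \<inter> A = I"
  using \<I>_sub g_fresh by blast

lemma g_in_branch_iff: "I \<in> \<I> \<Longrightarrow> J \<in> \<I> \<Longrightarrow> g J \<in> insert (g I) I \<longleftrightarrow> J = I"
  using \<I>_sub g_fresh inj_g by (auto dest: inj_onD)

lemma g0_notin_branch: "I \<in> \<I> \<Longrightarrow> g0 \<notin> insert (g I) I"
  using \<I>_sub g0_fresh by blast

lemma sat_gl_tester_rules_branch:
  assumes "I \<in> \<I>"
  shows "sat_rules (gl_rules tester_rules M) (insert (g I) I)"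
  using assms branch_Int_A g_in_branch_iff g0_notin_branch
  by (auto simp: sat_gl_tester_rules sat_branch_rules sat_probe_rules)

lemma branch_minimal:
  assumes I: "I \<in> \<I>" and sub: "M' \<subset> insert (g I) I"
  shows "\<not> sat_rules (gl_rules tester_rules (insert (g I) I)) M'"
proof
  assume sat: "sat_rules (gl_rules tester_rules (insert (g I) I)) M'"
  then obtain J where J: "J \<in> \<I>" "g J \<in> M'"
    using sub g0_notin_branch[OF I] by (auto simp: sat_gl_tester_rules)
  then have "J = I"
    using sub g_in_branch_iff[OF I] by blast
  then have "insert (g I) I \<subseteq> M'"
    using J sat by (auto simp: sat_gl_tester_rules sat_branch_rules)
  then show False
    using sub by blast
qed

lemma probe_refuted_iff:
  "(\<exists>M'. M' \<subset> insert g0 Y \<and> (M' \<inter> A, Y) \<in> S \<and> sat_rules (gl_rules tester_rules (insert g0 Y)) M')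
     \<longleftrightarrow> X \<noteq> Y \<and> (X, Y) \<in> S"
proof
  assume "\<exists>M'. M' \<subset> insert g0 Y \<and> (M' \<inter> A, Y) \<in> S \<and>
    sat_rules (gl_rules tester_rules (insert g0 Y)) M'"
  then obtain M' where sub: "M' \<subset> insert g0 Y" and SE: "(M' \<inter> A, Y) \<in> S"
    and sat: "sat_rules (gl_rules tester_rules (insert g0 Y)) M'"
    by blast
  have "g0 \<in> M'"
    using sat sub g0_fresh g_fresh Y_sub_A by (auto simp: sat_gl_tester_rules)
  then have probe: "X \<subseteq> M'" "M' \<inter> A \<subseteq> Y" "M' \<inter> (Y - X) \<noteq> {} \<longrightarrow> Y - X \<subseteq> M'"
    using sat by (auto simp: sat_gl_tester_rules sat_probe_rules)
  have "\<not> Y \<subseteq> M'"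
    using sub \<open>g0 \<in> M'\<close> by blast
  then have "M' \<inter> A = X"
    using probe X_sub_Y Y_sub_A by blast
  then show "X \<noteq> Y \<and> (X, Y) \<in> S"
    using SE probe(1) \<open>\<not> Y \<subseteq> M'\<close> by auto
next
  assume XY: "X \<noteq> Y \<and> (X, Y) \<in> S"
  have "g0 \<notin> Y" "g0 \<notin> X"
    using g0_fresh X_sub_Y Y_sub_A by blast+
  then have "insert g0 X \<subset> insert g0 Y"
    using XY X_sub_Y by (auto simp: psubset_eq insert_ident)
  moreover have "insert g0 X \<inter> A = X"
    using g0_fresh X_sub_Y Y_sub_A by blast
  then have "(insert g0 X \<inter> A, Y) \<in> S"
    using XY by simp
  moreover have "sat_rules (gl_rules tester_rules (insert g0 Y)) (insert g0 X)"
    using g0_fresh g_fresh X_sub_Y Y_sub_A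
    by (auto simp: sat_gl_tester_rules sat_branch_rules sat_probe_rules)
  ultimately show "\<exists>M'. M' \<subset> insert g0 Y \<and> (M' \<inter> A, Y) \<in> S \<and>
    sat_rules (gl_rules tester_rules (insert g0 Y)) M'"
    by blast
qed

lemma AS_tester_branch:
  assumes over: "rules_over A Q" and I: "I \<in> \<I>"
  shows "insert (g I) I \<in> AS (tester_atoms, Q \<union> tester_rules) \<longleftrightarrow> I \<in> Mods (A, Q)"
proof -
  have "insert (g I) I \<subseteq> tester_atoms" "sat_rules tester_rules (insert (g I) I)"
    using I \<I>_sub branch_Int_A g_in_branch_iff g0_notin_branch
    by (auto simp: tester_atoms_def sat_tester_rules sat_branch_rules sat_probe_rules
        sat_probe_constraints)
  moreover have "\<not> (\<exists>M'. M' \<subset> insert (g I) I \<and> (M' \<inter> A, I) \<in> SE (A, Q) \<and>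
      sat_rules (gl_rules tester_rules (insert (g I) I)) M')"
    using branch_minimal[OF I] by blast
  ultimately show ?thesis
    unfolding AS_Un_iff_SE[OF over A_sub_tester_atoms] branch_Int_A[OF I] SE_diag by simp
qed

lemma AS_tester_probe:
  assumes over: "rules_over A Q"
  shows "insert g0 Y \<in> AS (tester_atoms, Q \<union> tester_rules) \<longleftrightarrow> probe_passes X Y (SE (A, Q))"
proof -
  have M_Int_A: "insert g0 Y \<inter> A = Y"
    using g0_fresh Y_sub_A by blast
  have "insert g0 Y \<subseteq> tester_atoms" "sat_rules tester_rules (insert g0 Y)"
    using X_sub_Y Y_sub_A M_Int_A g0_fresh g_fresh
    by (auto simp: tester_atoms_def sat_tester_rules sat_branch_rules sat_probe_rules
        sat_probe_constraints)
  then show ?thesis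
    unfolding AS_Un_iff_SE[OF over A_sub_tester_atoms] M_Int_A probe_passes_def probe_refuted_iff
    by auto
qed

lemma AS_tester_cases:
  assumes over: "rules_over A Q" and M: "M \<in> AS (tester_atoms, Q \<union> tester_rules)"
  shows "(\<exists>I\<in>\<I>. M = insert (g I) I) \<or> M = insert g0 Y"
proof -
  have sub: "M \<subseteq> tester_atoms" and sat: "sat_rules tester_rules M"
    and SE: "(M \<inter> A, M \<inter> A) \<in> SE (A, Q)"
    and minimal: "\<not> (\<exists>M'. M' \<subset> M \<and> (M' \<inter> A, M \<inter> A) \<in> SE (A, Q) \<and>
       sat_rules (gl_rules tester_rules M) M')"
    using M unfolding AS_Un_iff_SE[OF over A_sub_tester_atoms] by blast+
  show ?thesis
  proof (cases "\<exists>I\<in>\<I>. g I \<in> M")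
    case True
    then obtain I where I: "I \<in> \<I>" "g I \<in> M"
      by blast
    then have M_Int_A: "M \<inter> A = I"
      using sat by (auto simp: sat_tester_rules sat_branch_rules)
    then have "insert (g I) I \<subseteq> M"
      using I by blast
    moreover have "(insert (g I) I \<inter> A, M \<inter> A) \<in> SE (A, Q)"
      using SE by (simp add: branch_Int_A[OF I(1)] M_Int_A)
    then have "\<not> insert (g I) I \<subset> M"
      using minimal sat_gl_tester_rules_branch[OF I(1), of M] by blast
    ultimately show ?thesis
      using I by blast
  next
    case False
    then have "g0 \<in> M"
      using sat by (auto simp: sat_tester_rules)
    then have "M \<inter> A = Y"
      using sat Y_sub_A by (auto simp: sat_tester_rules sat_probe_rules sat_probe_constraints)
    then have "M = insert g0 Y"
      using sub False \<open>g0 \<in> M\<close> by (auto simp: tester_atoms_def)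
    then show ?thesis ..
  qed
qed

lemma AS_tester:
  assumes "rules_over A Q"
  shows "AS (tester_atoms, Q \<union> tester_rules) =
    (\<lambda>I. insert (g I) I) ` (\<I> \<inter> Mods (A, Q)) \<union>
    (if probe_passes X Y (SE (A, Q)) then {insert g0 Y} else {})"
proof -
  have "M \<in> AS (tester_atoms, Q \<union> tester_rules) \<longleftrightarrow>
      (\<exists>I\<in>\<I> \<inter> Mods (A, Q). M = insert (g I) I) \<or> (probe_passes X Y (SE (A, Q)) \<and> M = insert g0 Y)"
    for M
    using AS_tester_cases[OF assms, of M] AS_tester_branch[OF assms] AS_tester_probe[OF assms]
    by blast
  then show ?thesis
    by auto
qed

lemma finite_tester_atoms: "finite tester_atoms"
  using finite_A \<I>_sub by (simp add: tester_atoms_def finite_subset)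

lemma tester_rules_sub:
  "tester_rules \<subseteq> Pow tester_atoms \<times> Pow (Atm ` tester_atoms \<union> (\<lambda>a. Neg (Atm a)) ` tester_atoms)"
  using \<I>_sub X_sub_Y Y_sub_A
  by (auto simp: tester_rules_def branch_rules_def probe_rules_def probe_constraints_def
      tester_atoms_def)

definition tester_elp :: "'a elp" where
  "tester_elp = (tester_atoms, {}, objective_rules tester_rules)"

lemma plain_tester_elp: "plain_elp tester_elp"
proof -
  have "finite tester_rules"
    using finite_subset[OF tester_rules_sub] finite_tester_atoms by blast
  moreover have "fst r \<subseteq> tester_atoms" "\<forall>f\<in>snd r. plain_belem f \<and> fatoms f \<subseteq> tester_atoms"
    if "r \<in> tester_rules" for r
  proof -
    have "snd r \<subseteq> Atm ` tester_atoms \<union> (\<lambda>a. Neg (Atm a)) ` tester_atoms"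
      and "fst r \<subseteq> tester_atoms"
      using subsetD[OF tester_rules_sub that] by (simp_all add: mem_Times_iff)
    then show "fst r \<subseteq> tester_atoms" "\<forall>f\<in>snd r. plain_belem f \<and> fatoms f \<subseteq> tester_atoms"
      by (auto simp: plain_belem_def is_literal_def)
  qed
  ultimately show ?thesis
    using finite_tester_atoms
    by (auto simp: plain_elp_def wf_elp_def tester_elp_def elp_eps_def objective_rules_def
        wf_ebody_def)
qed

lemma ep_reduct_union_tester_elp:
  assumes "elp_atoms P = A"
  shows "ep_reduct (elp_union P tester_elp) Psi =
    (tester_atoms, ered_rules Psi (elp_rules P) \<union> tester_rules)"
  using assms A_sub_tester_atoms
  by (auto simp: ep_reduct_eq elp_union_def tester_elp_def elp_atoms_def elp_rules_def
      ered_rules_Un ered_rules_objective_rules)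

lemma elp_eps_union_tester_elp: "elp_eps (elp_union P tester_elp) = elp_eps P"
  by (simp add: elp_union_def tester_elp_def elp_eps_def)

end

locale separating_tester = tester A \<I> g g0 X Y for A \<I> g g0 X Y +
  fixes W :: "'a elp" and Phi :: "'a fml set"
  assumes wf_W: "wf_elp W" and atoms_W: "elp_atoms W = A" and guess_W: "Phi \<subseteq> elp_eps W"
    and \<I>_models: "\<I> \<subseteq> Mods (ep_reduct W Phi)"
    and \<I>_compatible: "compatible \<I> Phi (elp_eps W)"
    and passes_W: "probe_passes X Y (SE (ep_reduct W Phi)) \<Longrightarrow> \<forall>l\<in>elp_eps W - Phi. sat Y l"
begin

definition world_view :: "'a set set" where
  "world_view = AS (tester_atoms, ered_rules Phi (elp_rules W) \<union> tester_rules)"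

lemma ep_reduct_W: "ep_reduct W Psi = (A, ered_rules Psi (elp_rules W))"
  using atoms_W by (simp add: ep_reduct_eq)

lemma over_W: "rules_over A (ered_rules Psi (elp_rules W))"
  using rules_over_ered_rules[OF wf_W] atoms_W by simp

lemma sat_branch_eps: "I \<in> \<I> \<Longrightarrow> l \<in> elp_eps W \<Longrightarrow> sat (insert (g I) I) l = sat I l"
  using wf_elpD(2)[OF wf_W] atoms_W g_fresh by (intro sat_insert_fresh) auto

lemma sat_probe_eps: "l \<in> elp_eps W \<Longrightarrow> sat (insert g0 Y) l = sat Y l"
  using wf_elpD(2)[OF wf_W] atoms_W g0_fresh by (intro sat_insert_fresh) auto

lemma world_view_eq:
  "world_view = (\<lambda>I. insert (g I) I) ` \<I> \<union>
     (if probe_passes X Y (SE (A, ered_rules Phi (elp_rules W))) then {insert g0 Y} else {})"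
proof -
  have "\<I> \<inter> Mods (A, ered_rules Phi (elp_rules W)) = \<I>"
    using \<I>_models atoms_W by (auto simp: ep_reduct_eq)
  then show ?thesis
    by (simp add: world_view_def AS_tester[OF over_W])
qed

lemma compatible_world_view: "compatible world_view Phi (elp_eps W)"
  using \<I>_compatible passes_W[unfolded ep_reduct_W] guess_W sat_branch_eps sat_probe_eps
  by (auto simp: compatible_def world_view_eq split: if_splits)

lemma cwv_world_view: "cwv_with (elp_union W tester_elp) Phi world_view"
  using guess_W compatible_world_view
  by (simp add: cwv_with_def ep_reduct_union_tester_elp[OF atoms_W] elp_eps_union_tester_elp
      world_view_def)

text \<open>
  A guess \<open>\<Psi> \<supset> Phi\<close> needs interpretations falsifying the literals of \<open>\<Psi> - Phi\<close>; the branches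
  cannot provide them, so the probe must. But the probe answer set does not depend on those
  literals, so it already belongs to \<open>world_view\<close>, where \<open>Phi\<close>-compatibility makes it satisfy them.
\<close>

lemma world_view_maximal: "\<not> (\<exists>Psi M. cwv_with (elp_union W tester_elp) Psi M \<and> Phi \<subset> Psi)"
proof (intro notI, elim exE conjE)
  fix Psi M
  assume cwv: "cwv_with (elp_union W tester_elp) Psi M" and larger: "Phi \<subset> Psi"
  have Psi_sub: "Psi \<subseteq> elp_eps W" and compat: "compatible M Psi (elp_eps W)"
    and M_eq: "M = AS (tester_atoms, ered_rules Psi (elp_rules W) \<union> tester_rules)"
    using cwv
    by (auto simp: cwv_with_def ep_reduct_union_tester_elp[OF atoms_W] elp_eps_union_tester_elp)
  have falsifies: "insert g0 Y \<in> M \<and> \<not> sat (insert g0 Y) l" if l: "l \<in> Psi - Phi" for l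
  proof -
    obtain m where m: "m \<in> M" "\<not> sat m l"
      using compat l by (auto simp: compatible_def)
    have "sat I l" if "I \<in> \<I>" for I
      using \<I>_compatible that l Psi_sub by (auto simp: compatible_def)
    then have "m = insert g0 Y"
      using m Psi_sub l sat_branch_eps by (auto simp: M_eq AS_tester[OF over_W] split: if_splits)
    then show ?thesis
      using m by simp
  qed
  obtain l0 where l0: "l0 \<in> Psi - Phi"
    using larger by blast
  have "\<forall>l\<in>Psi - Phi. \<not> sat (insert g0 Y) l"
    using falsifies by blast
  then have "insert g0 Y \<in> world_view"
    using AS_Un_ered_rules_extend_guess[OF psubset_imp_subset[OF larger]] falsifies[OF l0]
    unfolding world_view_def M_eq by blast
  then have "sat (insert g0 Y) l0"
    using compatible_world_view l0 Psi_sub by (auto simp: compatible_def)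
  then show False
    using falsifies[OF l0] by blast
qed

lemma world_view_not_cwv:
  assumes wf_L: "wf_elp L" and atoms_L: "elp_atoms L = A" and eps_L: "elp_eps L = elp_eps W"
    and differs: "realizable L Phi \<Longrightarrow>
      probe_passes X Y (SE (ep_reduct L Phi)) \<noteq> probe_passes X Y (SE (ep_reduct W Phi))"
  shows "\<not> cwv_with (elp_union L tester_elp) Psi world_view"
proof
  assume cwv: "cwv_with (elp_union L tester_elp) Psi world_view"
  have over_L: "rules_over A (ered_rules Phi (elp_rules L))"
    using rules_over_ered_rules[OF wf_L] atoms_L by simp
  have "compatible world_view Psi (elp_eps W)" "Psi \<subseteq> elp_eps W"
    using cwv by (auto simp: cwv_with_def elp_eps_union_tester_elp eps_L)
  then have "Psi = Phi"
    using compatible_guess_unique[OF _ compatible_world_view _ guess_W] by blast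
  then have L_eq: "world_view = AS (tester_atoms, ered_rules Phi (elp_rules L) \<union> tester_rules)"
    using cwv by (simp add: cwv_with_def ep_reduct_union_tester_elp[OF atoms_L])
  have "\<I> \<subseteq> Mods (ep_reduct L Phi)"
  proof
    fix I
    assume "I \<in> \<I>"
    moreover have "insert (g I) I \<in> world_view"
      using \<open>I \<in> \<I>\<close> by (simp add: world_view_eq)
    ultimately show "I \<in> Mods (ep_reduct L Phi)"
      using AS_tester_branch[OF over_L] atoms_L by (simp add: L_eq ep_reduct_eq)
  qed
  then have "realizable L Phi"
    using \<I>_compatible eps_L by (auto simp: realizable_def)
  moreover have "probe_passes X Y (SE (A, ered_rules Phi (elp_rules L))) =
      probe_passes X Y (SE (A, ered_rules Phi (elp_rules W)))"
    using AS_tester_probe[OF over_L] AS_tester_probe[OF over_W] L_eq world_view_def by blast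
  ultimately show False
    using differs by (simp add: ep_reduct_W ep_reduct_eq atoms_L atoms_W)
qed

lemma world_view_separates:
  assumes "wf_elp L" "elp_atoms L = A" "elp_eps L = elp_eps W"
    and "realizable L Phi \<Longrightarrow>
      probe_passes X Y (SE (ep_reduct L Phi)) \<noteq> probe_passes X Y (SE (ep_reduct W Phi))"
  shows "world_view \<in> WV (elp_union W tester_elp) - CWV (elp_union L tester_elp)"
  using cwv_world_view world_view_maximal world_view_not_cwv[OF assms]
  by (auto simp: WV_def CWV_def)

end

lemma tester_exists:
  fixes A :: "'a set"
  assumes "infinite (UNIV :: 'a set)" "finite A" "\<I> \<subseteq> Pow A" "X \<subseteq> Y" "Y \<subseteq> A"
  shows "\<exists>g g0. tester A \<I> g g0 X Y"
proof -
  obtain f :: "nat \<Rightarrow> 'a" where f: "inj f" "range f \<subseteq> - A"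
    using infinite_countable_subset[of "- A"] assms(1,2) by (auto simp: Compl_eq_Diff_UNIV)
  have "finite \<I>"
    using assms(2,3) by (simp add: finite_subset)
  then obtain h :: "'a set \<Rightarrow> nat" where h: "inj_on h \<I>"
    using finite_imp_inj_to_nat_seg by blast
  have "inj_on (\<lambda>I. f (Suc (h I))) \<I>"
    using h by (simp add: inj_on_def inj_eq[OF f(1)])
  moreover have "f n \<notin> A" for n
    using f(2) by blast
  moreover have "f 0 \<noteq> f (Suc n)" for n
    by (simp add: inj_eq[OF f(1)])
  ultimately have "tester A \<I> (\<lambda>I. f (Suc (h I))) (f 0) X Y"
    using assms(2-5) by unfold_locales auto
  then show ?thesis
    by blast
qed

definition plain_separable :: "'a elp \<Rightarrow> 'a elp \<Rightarrow> bool" where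
  "plain_separable P1 P2 \<longleftrightarrow> (\<exists>R. plain_elp R \<and>
     CWV (elp_union P1 R) \<noteq> CWV (elp_union P2 R) \<and> WV (elp_union P1 R) \<noteq> WV (elp_union P2 R))"

lemma plain_separable_sym: "plain_separable P1 P2 \<Longrightarrow> plain_separable P2 P1"
  unfolding plain_separable_def by metis

lemma plain_separable_by_probe:
  fixes W L :: "'a elp"
  assumes inf: "infinite (UNIV :: 'a set)" and wf: "wf_elp W" "wf_elp L"
    and same: "elp_atoms L = elp_atoms W" "elp_eps L = elp_eps W"
    and guess: "Phi \<subseteq> elp_eps W" and realizable: "realizable W Phi"
    and XY: "X \<subseteq> Y" "Y \<subseteq> elp_atoms W"
    and passes_W: "probe_passes X Y (SE (ep_reduct W Phi)) \<Longrightarrow> \<forall>l\<in>elp_eps W - Phi. sat Y l"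
    and differs: "realizable L Phi \<Longrightarrow>
      probe_passes X Y (SE (ep_reduct L Phi)) \<noteq> probe_passes X Y (SE (ep_reduct W Phi))"
  shows "plain_separable W L"
proof -
  obtain \<I> where \<I>: "\<I> \<subseteq> Mods (ep_reduct W Phi)" "compatible \<I> Phi (elp_eps W)"
    using realizable by (auto simp: realizable_def)
  then have "\<I> \<subseteq> Pow (elp_atoms W)"
    by (auto simp: Mods_def ep_reduct_eq)
  then have "\<exists>g g0. tester (elp_atoms W) \<I> g g0 X Y"
    by (rule tester_exists[OF inf wf_elpD(1)[OF wf(1)] _ XY])
  then obtain g g0 where "tester (elp_atoms W) \<I> g g0 X Y"
    by blast
  then interpret separating_tester "elp_atoms W" \<I> g g0 X Y W Phi
    using wf guess \<I> passes_W by (simp add: separating_tester_def separating_tester_axioms_def)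
  have "world_view \<in> WV (elp_union W tester_elp) - CWV (elp_union L tester_elp)"
    using world_view_separates wf same differs by blast
  then show ?thesis
    using plain_tester_elp WV_subset_CWV unfolding plain_separable_def by blast
qed

lemma plain_separable_if_SE_differs:
  fixes P1 P2 :: "'a elp"
  assumes inf: "infinite (UNIV :: 'a set)" and wf: "wf_elp P1" "wf_elp P2"
    and same: "elp_atoms P1 = elp_atoms P2" "elp_eps P1 = elp_eps P2"
    and guess: "Phi \<subseteq> elp_eps P1" and realizable: "realizable P1 Phi" "realizable P2 Phi"
    and XY: "(X, Y) \<in> SE (ep_reduct P1 Phi)" "(X, Y) \<notin> SE (ep_reduct P2 Phi)"
  shows "plain_separable P1 P2"
proof -
  have sub: "X \<subseteq> Y" "Y \<subseteq> elp_atoms P1"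
    using XY(1) by (auto simp: SE_iff ep_reduct_eq)
  show ?thesis
  proof (cases "(Y, Y) \<in> SE (ep_reduct P2 Phi)")
    case True
    then have "probe_passes X Y (SE (ep_reduct P2 Phi))" "\<not> probe_passes X Y (SE (ep_reduct P1 Phi))"
      using XY by (auto simp: probe_passes_def)
    then show ?thesis
      using plain_separable_by_probe[OF inf wf same[symmetric] guess realizable(1) sub] by blast
  next
    case False
    then have "probe_passes Y Y (SE (ep_reduct P1 Phi))" "\<not> probe_passes Y Y (SE (ep_reduct P2 Phi))"
      using SE_top[OF XY(1)] by (auto simp: probe_passes_def)
    then have "plain_separable P2 P1"
      using plain_separable_by_probe[OF inf wf(2,1) same guess[unfolded same]
          realizable(2) subset_refl] sub same(1)
      by auto
    then show ?thesis
      by (rule plain_separable_sym)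
  qed
qed

lemma plain_separable_if_realizable_differs:
  fixes P1 P2 :: "'a elp"
  assumes inf: "infinite (UNIV :: 'a set)" and wf: "wf_elp P1" "wf_elp P2"
    and same: "elp_atoms P1 = elp_atoms P2" "elp_eps P1 = elp_eps P2"
    and guess: "Phi \<subseteq> elp_eps P1" and realizable: "realizable P1 Phi" "\<not> realizable P2 Phi"
  shows "plain_separable P1 P2"
proof -
  obtain \<I> I where "\<I> \<subseteq> Mods (ep_reduct P1 Phi)" "compatible \<I> Phi (elp_eps P1)" "I \<in> \<I>"
    using realizable(1) by (auto simp: realizable_def compatible_def)
  then have "I \<subseteq> elp_atoms P1" "\<forall>l\<in>elp_eps P1 - Phi. sat I l"
    by (auto simp: Mods_def ep_reduct_eq compatible_def)
  then show ?thesis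
    using plain_separable_by_probe[OF inf wf same[symmetric] guess realizable(1) subset_refl]
      realizable(2)
    by blast
qed

lemma plain_separable_if_SE_fun_neq:
  fixes P1 P2 :: "'a elp"
  assumes inf: "infinite (UNIV :: 'a set)" and wf: "wf_elp P1" "wf_elp P2"
    and same: "elp_atoms P1 = elp_atoms P2" "elp_eps P1 = elp_eps P2"
    and neq: "SE_fun P1 Phi \<noteq> SE_fun P2 Phi"
  shows "plain_separable P1 P2"
proof -
  have guess: "Phi \<subseteq> elp_eps P1"
    using neq same(2) by (auto simp: SE_fun_def split: if_splits)
  have "realizable P1 Phi \<or> realizable P2 Phi"
    using neq by (auto simp: SE_fun_def)
  then consider "realizable P1 Phi" "realizable P2 Phi" | "realizable P1 Phi" "\<not> realizable P2 Phi"
    | "\<not> realizable P1 Phi" "realizable P2 Phi"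
    by blast
  then show ?thesis
  proof cases
    case 1
    then have "SE (ep_reduct P1 Phi) \<noteq> SE (ep_reduct P2 Phi)"
      using neq guess same(2) by (simp add: SE_fun_def)
    then obtain X Y where "(X, Y) \<in> SE (ep_reduct P1 Phi) - SE (ep_reduct P2 Phi)
        \<or> (X, Y) \<in> SE (ep_reduct P2 Phi) - SE (ep_reduct P1 Phi)"
      by auto
    then show ?thesis
      using plain_separable_if_SE_differs[OF inf wf same guess 1]
        plain_separable_if_SE_differs[OF inf wf(2,1) same[symmetric] guess[unfolded same] 1(2,1)]
        plain_separable_sym
      by blast
  next
    case 2
    then show ?thesis
      using plain_separable_if_realizable_differs[OF inf wf same guess] by blast
  next
    case 3
    then show ?thesis
      using plain_separable_if_realizable_differs[OF inf wf(2,1) same[symmetric]]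
        guess[unfolded same] plain_separable_sym
      by blast
  qed
qed

theorem theorem2:
  fixes P1 P2 :: "'a elp"
  assumes "infinite (UNIV :: 'a set)"
    and "wf_elp P1" and "wf_elp P2"
    and "elp_atoms P1 = elp_atoms P2" and "elp_eps P1 = elp_eps P2"
  shows "(strongly_elp_cwv_eq P1 P2 \<longleftrightarrow> strongly_asp_cwv_eq P1 P2)
       \<and> (strongly_asp_cwv_eq P1 P2 \<longleftrightarrow> strongly_elp_wv_eq P1 P2)
       \<and> (strongly_elp_wv_eq P1 P2 \<longleftrightarrow> strongly_asp_wv_eq P1 P2)
       \<and> (strongly_asp_wv_eq P1 P2 \<longleftrightarrow> SE_fun P1 = SE_fun P2)"
proof -
  have "strongly_elp_cwv_eq P1 P2 \<Longrightarrow> strongly_asp_cwv_eq P1 P2"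
    "strongly_elp_wv_eq P1 P2 \<Longrightarrow> strongly_asp_wv_eq P1 P2"
    by (auto simp: strongly_elp_cwv_eq_def strongly_asp_cwv_eq_def
        strongly_elp_wv_eq_def strongly_asp_wv_eq_def plain_elp_def)
  moreover have "SE_fun P1 = SE_fun P2 \<Longrightarrow> strongly_elp_cwv_eq P1 P2 \<and> strongly_elp_wv_eq P1 P2"
    using CWV_WV_union_eq_if_SE_fun_eq[OF assms(2-5)]
    by (simp add: strongly_elp_cwv_eq_def strongly_elp_wv_eq_def)
  moreover have "SE_fun P1 = SE_fun P2" if "strongly_asp_cwv_eq P1 P2 \<or> strongly_asp_wv_eq P1 P2"
  proof (rule ccontr)
    assume "SE_fun P1 \<noteq> SE_fun P2"
    then obtain Phi where "SE_fun P1 Phi \<noteq> SE_fun P2 Phi"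
      by blast
    then have "plain_separable P1 P2"
      by (rule plain_separable_if_SE_fun_neq[OF assms])
    then show False
      using that by (auto simp: plain_separable_def strongly_asp_cwv_eq_def strongly_asp_wv_eq_def)
  qed
  ultimately show ?thesis
    by blast
qed

end
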